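(* Let $(\mathcal V,[\cdot,\cdots,\cdot],S)$ be a generalized metric $n$-Leibniz algebra, let $\mathfrak g=\mathrm{Im}\,D\subset\mathfrak{gl}(\mathcal V)$ with commutator bracket $[\cdot,\cdot]_C$, and let $\omega$ be the bilinear form on $\mathfrak g$ given by $\omega(D(u_1,\dots,u_{n-1}),D(v_1,\dots,v_{n-1}))=S([u_1,\dots,u_{n-1},v_1],v_2,\dots,v_{n-1})$. Then $(\mathfrak g,\mathcal V,\mathrm{Id})$ is a Lie triple data: $(\mathfrak g,[\cdot,\cdot]_C,\omega)$ is a metric Lie algebra and the inclusion $\mathrm{Id}:\mathfrak g\to\mathfrak{gl}(\mathcal V)$ is a faithful generalized orthogonal representation on $(\mathcal V,S)$.
   Context: All vector spaces are finite-dimensional over $\mathbb R$. An $n$-Leibniz algebra is a vector space $\mathcal V$ with an $n$-linear map $[\cdot,\cdots,\cdot]$ satisfying $[u_1,\dots,u_{n-1},[v_1,\dots,v_n]]=\sum_{i=1}^n[v_1,\dots,[u_1,\dots,u_{n-1},v_i],\dots,v_n]$. A symmetric $S\in\mathrm{Sym}^{n-1}(\mathcal V^* )$ is non-degenerate if $S(u,v_1,\dots,v_{n-2})=0$ for all $v_j$ implies $u=0$. A generalized metric $n$-Leibniz algebra is an $n$-Leibniz algebra with a symmetric non-degenerate $S\in\mathrm{Sym}^{n-1}(\mathcal V^* )$ satisfying (a) unitarity: $\sum_{i=1}^{n-1}S(v_1,\dots,[u_1,\dots,u_{n-1},v_i],\dots,v_{n-1})=0$ and (b) symmetry: $S([u_1,\dots,u_{n-1},v_1],v_2,\dots,v_{n-1})=S([v_1,\dots,v_{n-1},u_1],u_2,\dots,u_{n-1})$.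 $D(u_1,\dots,u_{n-1})\in\mathfrak{gl}(\mathcal V)$ is $u_n\mapsto[u_1,\dots,u_{n-1},u_n]$, and $\mathrm{Im}\,D$ is the linear span of these. A metric Lie algebra is a Lie algebra with a symmetric non-degenerate bilinear form $\omega$ with $\omega([x,y],z)=-\omega(y,[x,z])$. A representation $\rho:\mathfrak g\to\mathfrak{gl}(\mathcal V)$ is generalized orthogonal (w.r.t. $S$) if $\sum_{i=1}^{n-1}S(w_1,\dots,\rho(x)w_i,\dots,w_{n-1})=0$ for all $x,w_j$. A Lie triple data $(\mathfrak g,\mathcal V,\rho)$ consists of a metric Lie algebra $(\mathfrak g,[\cdot,\cdot],\omega)$, a vector space $\mathcal V$ with a symmetric non-degenerate $S\in\mathrm{Sym}^{n-1}(\mathcal V^* )$, and a faithful (injective) generalized orthogonal representation $\rho:\mathfrak g\to\mathfrak{gl}(\mathcal V)$. *)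

theory Defs
  imports "HOL-Analysis.Analysis"
begin

text \<open>Multilinear maps of arity k are modelled as functions on lists; only their
values on lists of length k matter. Elements of gl(V) are functions 'v \<Rightarrow> 'v
with the pointwise vector-space structure.\<close>

definition multilinear :: "nat \<Rightarrow> ('v::real_vector list \<Rightarrow> 'w::real_vector) \<Rightarrow> bool" where
  "multilinear k f \<longleftrightarrow>
     (\<forall>xs i. length xs = k \<longrightarrow> i < k \<longrightarrow> linear (\<lambda>y. f (xs[i := y])))"

definition symmetric_form :: "nat \<Rightarrow> ('v::real_vector list \<Rightarrow> real) \<Rightarrow> bool" where
  "symmetric_form k S \<longleftrightarrow> multilinear k S \<and>
     (\<forall>xs ys. length xs = k \<longrightarrow> mset xs = mset ys \<longrightarrow> S xs = S ys)"

text \<open>Non-degeneracy of S in Sym^k(V*) (here k = n-1, so the tail has length k-1).\<close>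
definition nondegenerate_form :: "nat \<Rightarrow> ('v::real_vector list \<Rightarrow> real) \<Rightarrow> bool" where
  "nondegenerate_form k S \<longleftrightarrow>
     (\<forall>u. (\<forall>vs. length vs = k - 1 \<longrightarrow> S (u # vs) = 0) \<longrightarrow> u = 0)"

definition n_leibniz :: "nat \<Rightarrow> ('v::real_vector list \<Rightarrow> 'v) \<Rightarrow> bool" where
  "n_leibniz n br \<longleftrightarrow> multilinear n br \<and>
     (\<forall>us vs. length us = n - 1 \<longrightarrow> length vs = n \<longrightarrow>
        br (us @ [br vs]) = (\<Sum>i<n. br (vs[i := br (us @ [vs ! i])])))"

definition gen_metric_leibniz ::
    "nat \<Rightarrow> ('v::real_vector list \<Rightarrow> 'v) \<Rightarrow> ('v list \<Rightarrow> real) \<Rightarrow> bool" where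
  "gen_metric_leibniz n br S \<longleftrightarrow>
     n_leibniz n br \<and> symmetric_form (n - 1) S \<and> nondegenerate_form (n - 1) S \<and>
     \<comment> \<open>(a) unitarity\<close>
     (\<forall>us vs. length us = n - 1 \<longrightarrow> length vs = n - 1 \<longrightarrow>
        (\<Sum>i<n - 1. S (vs[i := br (us @ [vs ! i])])) = 0) \<and>
     \<comment> \<open>(b) symmetry\<close>
     (\<forall>us vs. length us = n - 1 \<longrightarrow> length vs = n - 1 \<longrightarrow>
        S (br (us @ [hd vs]) # tl vs) = S (br (vs @ [hd us]) # tl us))"

definition Dop :: "('v list \<Rightarrow> 'v) \<Rightarrow> 'v list \<Rightarrow> 'v \<Rightarrow> 'v" where
  "Dop br us = (\<lambda>w. br (us @ [w]))"

definition ImD :: "nat \<Rightarrow> ('v::real_vector list \<Rightarrow> 'v) \<Rightarrow> ('v \<Rightarrow> 'v) set" where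
  "ImD n br = {X. \<exists>m (c::nat \<Rightarrow> real) (us::nat \<Rightarrow> 'v list).
      (\<forall>k<m. length (us k) = n - 1) \<and>
      X = (\<lambda>w. \<Sum>k<m. c k *\<^sub>R Dop br (us k) w)}"

definition commutator :: "('v::real_vector \<Rightarrow> 'v) \<Rightarrow> ('v \<Rightarrow> 'v) \<Rightarrow> 'v \<Rightarrow> 'v" where
  "commutator A B = (\<lambda>w. A (B w) - B (A w))"

definition fadd :: "('a \<Rightarrow> 'v::real_vector) \<Rightarrow> ('a \<Rightarrow> 'v) \<Rightarrow> 'a \<Rightarrow> 'v" where
  "fadd f g = (\<lambda>x. f x + g x)"
definition fscale :: "real \<Rightarrow> ('a \<Rightarrow> 'v::real_vector) \<Rightarrow> 'a \<Rightarrow> 'v" where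
  "fscale c f = (\<lambda>x. c *\<^sub>R f x)"

definition fsubspace :: "('a \<Rightarrow> 'v::real_vector) set \<Rightarrow> bool" where
  "fsubspace G \<longleftrightarrow> (\<lambda>x. 0) \<in> G \<and> (\<forall>x\<in>G. \<forall>y\<in>G. fadd x y \<in> G) \<and>
     (\<forall>c. \<forall>x\<in>G. fscale c x \<in> G)"

definition bilinear_on ::
    "('a \<Rightarrow> 'v::real_vector) set \<Rightarrow> (('a \<Rightarrow> 'v) \<Rightarrow> ('a \<Rightarrow> 'v) \<Rightarrow> real) \<Rightarrow> bool" where
  "bilinear_on G b \<longleftrightarrow>
     (\<forall>x\<in>G. \<forall>y\<in>G. \<forall>z\<in>G. \<forall>a c.
        b (fadd (fscale a x) (fscale c y)) z = a * b x z + c * b y z \<and>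
        b z (fadd (fscale a x) (fscale c y)) = a * b z x + c * b z y)"

definition bilinear_op_on ::
    "('a \<Rightarrow> 'v::real_vector) set \<Rightarrow> (('a \<Rightarrow> 'v) \<Rightarrow> ('a \<Rightarrow> 'v) \<Rightarrow> ('a \<Rightarrow> 'v)) \<Rightarrow> bool" where
  "bilinear_op_on G b \<longleftrightarrow>
     (\<forall>x\<in>G. \<forall>y\<in>G. \<forall>z\<in>G. \<forall>a c.
        b (fadd (fscale a x) (fscale c y)) z = fadd (fscale a (b x z)) (fscale c (b y z)) \<and>
        b z (fadd (fscale a x) (fscale c y)) = fadd (fscale a (b z x)) (fscale c (b z y)))"

definition lie_algebra_on :: "('a \<Rightarrow> 'v::real_vector) set \<Rightarrow> (('a \<Rightarrow> 'v) \<Rightarrow> ('a \<Rightarrow> 'v) \<Rightarrow> ('a \<Rightarrow> 'v)) \<Rightarrow> bool" where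
  "lie_algebra_on G lb \<longleftrightarrow> fsubspace G \<and> (\<forall>x\<in>G. \<forall>y\<in>G. lb x y \<in> G) \<and>
     bilinear_op_on G lb \<and> (\<forall>x\<in>G. lb x x = (\<lambda>_. 0)) \<and>
     (\<forall>x\<in>G. \<forall>y\<in>G. \<forall>z\<in>G.
        fadd (fadd (lb x (lb y z)) (lb y (lb z x))) (lb z (lb x y)) = (\<lambda>_. 0))"

definition metric_lie_algebra ::
    "('a \<Rightarrow> 'v::real_vector) set \<Rightarrow> (('a \<Rightarrow> 'v) \<Rightarrow> ('a \<Rightarrow> 'v) \<Rightarrow> ('a \<Rightarrow> 'v))
     \<Rightarrow> (('a \<Rightarrow> 'v) \<Rightarrow> ('a \<Rightarrow> 'v) \<Rightarrow> real) \<Rightarrow> bool" where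
  "metric_lie_algebra G lb \<omega> \<longleftrightarrow> lie_algebra_on G lb \<and> bilinear_on G \<omega> \<and>
     (\<forall>x\<in>G. \<forall>y\<in>G. \<omega> x y = \<omega> y x) \<and>
     (\<forall>x\<in>G. (\<forall>y\<in>G. \<omega> x y = 0) \<longrightarrow> x = (\<lambda>_. 0)) \<and>
     (\<forall>x\<in>G. \<forall>y\<in>G. \<forall>z\<in>G. \<omega> (lb x y) z = - \<omega> y (lb x z))"

definition representation_on ::
    "('a \<Rightarrow> 'w::real_vector) set \<Rightarrow> (('a \<Rightarrow> 'w) \<Rightarrow> ('a \<Rightarrow> 'w) \<Rightarrow> ('a \<Rightarrow> 'w))
     \<Rightarrow> (('a \<Rightarrow> 'w) \<Rightarrow> 'v::real_vector \<Rightarrow> 'v) \<Rightarrow> bool" where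
  "representation_on G lb \<rho> \<longleftrightarrow>
     (\<forall>x\<in>G. linear (\<rho> x)) \<and>
     (\<forall>x\<in>G. \<forall>y\<in>G. \<forall>a c. \<rho> (fadd (fscale a x) (fscale c y)) = fadd (fscale a (\<rho> x)) (fscale c (\<rho> y))) \<and>
     (\<forall>x\<in>G. \<forall>y\<in>G. \<rho> (lb x y) = commutator (\<rho> x) (\<rho> y))"

definition gen_orthogonal ::
    "nat \<Rightarrow> ('v::real_vector list \<Rightarrow> real) \<Rightarrow> ('g set) \<Rightarrow> ('g \<Rightarrow> 'v \<Rightarrow> 'v) \<Rightarrow> bool" where
  "gen_orthogonal n S G \<rho> \<longleftrightarrow>
     (\<forall>x\<in>G. \<forall>ws. length ws = n - 1 \<longrightarrow> (\<Sum>i<n - 1. S (ws[i := \<rho> x (ws ! i)])) = 0)"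

definition lie_triple_data ::
    "nat \<Rightarrow> ('a \<Rightarrow> 'w::real_vector) set \<Rightarrow> (('a \<Rightarrow> 'w) \<Rightarrow> ('a \<Rightarrow> 'w) \<Rightarrow> ('a \<Rightarrow> 'w))
     \<Rightarrow> (('a \<Rightarrow> 'w) \<Rightarrow> ('a \<Rightarrow> 'w) \<Rightarrow> real) \<Rightarrow> ('v::real_vector list \<Rightarrow> real)
     \<Rightarrow> (('a \<Rightarrow> 'w) \<Rightarrow> 'v \<Rightarrow> 'v) \<Rightarrow> bool" where
  "lie_triple_data n G lb \<omega> S \<rho> \<longleftrightarrow>
     metric_lie_algebra G lb \<omega> \<and> symmetric_form (n - 1) S \<and> nondegenerate_form (n - 1) S \<and>
     representation_on G lb \<rho> \<and> inj_on \<rho> G \<and> gen_orthogonal n S G \<rho>"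

end

theory Submission
  imports Defs
begin

(*
  Im D consists of the finite combinations \<Sum>\<^sub>k c\<^sub>k D(u\<^sub>k), and the Leibniz identity
  gives [D(u), D(v)] = \<Sum>\<^sub>i D(v\<^sub>1, \<dots>, [u, v\<^sub>i], \<dots>, v\<^sub>n\<^sub>-\<^sub>1), so Im D is a Lie
  subalgebra of gl(V). For X = \<Sum>\<^sub>k c\<^sub>k D(u\<^sub>k) put \<omega>(X, Y) = \<Sum>\<^sub>k c\<^sub>k S(Y u\<^sub>k\<^sub>1, u\<^sub>k\<^sub>2, \<dots>).
  By the symmetry axiom this equals the same expression computed from a representation of Y
  with the roles of X and Y exchanged, so \<omega> does not depend on the chosen representation and
  is symmetric; since \<omega>(X, D(w, v\<^sub>2, \<dots>)) = S(X w, v\<^sub>2, \<dots>), it is non-degenerate because S is.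
  Unitarity says that every D(u) is generalized orthogonal, and applied to the list
  (Y t\<^sub>1, t\<^sub>2, \<dots>) it yields \<omega>([D u, Y], D t) = -\<omega>(Y, [D u, D t]); both statements extend
  from the generators D(u) to Im D by bilinearity.
*)

lemma fadd_fscale_one: "fadd (fscale 1 X) (fscale c Y) = fadd X (fscale c Y)"
  by (simp add: fscale_def)

lemma fadd_fscale_zero: "fadd (fscale 0 X) (fscale 0 X) = (\<lambda>_. 0)"
  by (simp add: fadd_def fscale_def)

lemma bilinear_op_on_add_scale:
  assumes "bilinear_op_on G b" and "X \<in> G" "Y \<in> G" "Z \<in> G"
  shows "b (fadd X (fscale c Y)) Z = fadd (b X Z) (fscale c (b Y Z))"
    and "b Z (fadd X (fscale c Y)) = fadd (b Z X) (fscale c (b Z Y))"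
  using assms(1)[unfolded bilinear_op_on_def, rule_format, OF assms(2-4), of 1 c]
  by (simp_all only: fadd_fscale_one)

lemma bilinear_op_on_zero:
  assumes "bilinear_op_on G b" and "Z \<in> G"
  shows "b (\<lambda>_. 0) Z = (\<lambda>_. 0)" and "b Z (\<lambda>_. 0) = (\<lambda>_. 0)"
  using assms(1)[unfolded bilinear_op_on_def, rule_format, OF assms(2) assms(2) assms(2), of 0 0]
  by (simp_all only: fadd_fscale_zero)

lemma bilinear_on_add_scale:
  assumes "bilinear_on G B" and "X \<in> G" "Y \<in> G" "Z \<in> G"
  shows "B (fadd X (fscale c Y)) Z = B X Z + c * B Y Z"
    and "B Z (fadd X (fscale c Y)) = B Z X + c * B Z Y"
  using assms(1)[unfolded bilinear_on_def, rule_format, OF assms(2-4), of 1 c]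
  by (simp_all only: fadd_fscale_one mult_1)

lemma bilinear_on_zero:
  assumes "bilinear_on G B" and "Z \<in> G"
  shows "B (\<lambda>_. 0) Z = 0" and "B Z (\<lambda>_. 0) = 0"
  using assms(1)[unfolded bilinear_on_def, rule_format, OF assms(2) assms(2) assms(2), of 0 0]
  by (simp_all only: fadd_fscale_zero mult_zero_left add_0)

lemma bilinear_on_invariance_defect:
  assumes \<omega>: "bilinear_on G \<omega>" and b: "bilinear_op_on G b"
    and closed: "\<And>x y. x \<in> G \<Longrightarrow> y \<in> G \<Longrightarrow> b x y \<in> G" and "Y \<in> G"
  shows "bilinear_on G (\<lambda>X Z. \<omega> (b X Y) Z + \<omega> Y (b X Z))"
  unfolding bilinear_on_def
proof (intro ballI allI conjI)
  fix x y z a c assume "x \<in> G" "y \<in> G" "z \<in> G"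
  note \<omega>_lin = \<omega>[unfolded bilinear_on_def, rule_format]
  note b_lin = b[unfolded bilinear_op_on_def, rule_format]
  show "\<omega> (b (fadd (fscale a x) (fscale c y)) Y) z + \<omega> Y (b (fadd (fscale a x) (fscale c y)) z)
      = a * (\<omega> (b x Y) z + \<omega> Y (b x z)) + c * (\<omega> (b y Y) z + \<omega> Y (b y z))"
    using \<open>x \<in> G\<close> \<open>y \<in> G\<close> \<open>z \<in> G\<close> \<open>Y \<in> G\<close>
    by (simp add: b_lin \<omega>_lin closed algebra_simps)
  show "\<omega> (b z Y) (fadd (fscale a x) (fscale c y)) + \<omega> Y (b z (fadd (fscale a x) (fscale c y)))
      = a * (\<omega> (b z Y) x + \<omega> Y (b z x)) + c * (\<omega> (b z Y) y + \<omega> Y (b z y))"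
    using \<open>x \<in> G\<close> \<open>y \<in> G\<close> \<open>z \<in> G\<close> \<open>Y \<in> G\<close>
    by (simp add: b_lin \<omega>_lin closed algebra_simps)
qed

lemma commutator_bilinear_op_on:
  assumes "\<And>z. z \<in> G \<Longrightarrow> linear z"
  shows "bilinear_op_on G commutator"
  using assms
  by (auto simp: bilinear_op_on_def commutator_def fadd_def fscale_def linear_add linear_scale
      algebra_simps)

lemma commutator_jacobi:
  assumes "linear x" "linear y" "linear z"
  shows "fadd (fadd (commutator x (commutator y z)) (commutator y (commutator z x)))
           (commutator z (commutator x y)) = (\<lambda>_. 0)"
  by (simp add: fadd_def commutator_def linear_diff[OF assms(1)] linear_diff[OF assms(2)]
      linear_diff[OF assms(3)])

lemma lie_algebra_on_commutator:
  assumes "fsubspace G" and "\<And>x. x \<in> G \<Longrightarrow> linear x"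
    and "\<And>x y. x \<in> G \<Longrightarrow> y \<in> G \<Longrightarrow> commutator x y \<in> G"
  shows "lie_algebra_on G commutator"
  using assms commutator_bilinear_op_on[of G] commutator_jacobi
  unfolding lie_algebra_on_def by (simp add: commutator_def[of x x for x]) blast

lemma representation_on_id:
  assumes "\<And>x. x \<in> G \<Longrightarrow> linear x"
  shows "representation_on G commutator id"
  using assms by (simp add: representation_on_def)

locale generalized_metric_leibniz =
  fixes n :: nat and br :: "'v::real_vector list \<Rightarrow> 'v" and S :: "'v list \<Rightarrow> real"
  assumes n_ge_2: "n \<ge> 2" and gml: "gen_metric_leibniz n br S"
begin

abbreviation "D \<equiv> Dop br"
abbreviation "G \<equiv> ImD n br"

lemma multilinear_br: "multilinear n br"
  using gml by (simp add: gen_metric_leibniz_def n_leibniz_def)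

lemma leibniz:
  "length us = n - 1 \<Longrightarrow> length vs = n \<Longrightarrow>
     br (us @ [br vs]) = (\<Sum>i<n. br (vs[i := br (us @ [vs ! i])]))"
  using gml by (simp add: gen_metric_leibniz_def n_leibniz_def)

lemma symmetric_S: "symmetric_form (n - 1) S"
  using gml by (simp add: gen_metric_leibniz_def)

lemma nondegenerate_S: "nondegenerate_form (n - 1) S"
  using gml by (simp add: gen_metric_leibniz_def)

lemma unitarity:
  "length us = n - 1 \<Longrightarrow> length vs = n - 1 \<Longrightarrow>
     (\<Sum>i<n - 1. S (vs[i := br (us @ [vs ! i])])) = 0"
  using gml by (simp add: gen_metric_leibniz_def)

lemma symmetry:
  "length us = n - 1 \<Longrightarrow> length vs = n - 1 \<Longrightarrow>
     S (br (us @ [hd vs]) # tl vs) = S (br (vs @ [hd us]) # tl us)"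
  using gml by (simp add: gen_metric_leibniz_def)

lemma linear_D: assumes "length u = n - 1" shows "linear (D u)"
proof -
  have "length (u @ [0]) = n" "n - 1 < n" using assms n_ge_2 by auto
  then have "linear (\<lambda>y. br ((u @ [0])[n - 1 := y]))"
    using multilinear_br unfolding multilinear_def by blast
  then show ?thesis using assms by (simp add: Dop_def list_update_append)
qed

lemma linear_S_slot:
  "length ws = n - 1 \<Longrightarrow> i < n - 1 \<Longrightarrow> linear (\<lambda>y. S (ws[i := y]))"
  using symmetric_S unfolding symmetric_form_def multilinear_def by blast

lemma linear_S_hd: assumes "length t = n - 2" shows "linear (\<lambda>y. S (y # t))"
  using linear_S_slot[of "0 # t" 0] assms n_ge_2 by simp

subsection \<open>Im D as the set of finite combinations of the operators D(u)\<close>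

definition admissible :: "nat \<Rightarrow> (nat \<Rightarrow> 'v list) \<Rightarrow> bool" where
  "admissible m u \<longleftrightarrow> (\<forall>k<m. length (u k) = n - 1)"

definition D_comb :: "nat \<Rightarrow> (nat \<Rightarrow> real) \<Rightarrow> (nat \<Rightarrow> 'v list) \<Rightarrow> 'v \<Rightarrow> 'v" where
  "D_comb m c u = (\<lambda>w. \<Sum>k<m. c k *\<^sub>R D (u k) w)"

lemma ImD_iff: "X \<in> G \<longleftrightarrow> (\<exists>m c u. admissible m u \<and> X = D_comb m c u)"
  by (auto simp: ImD_def D_comb_def admissible_def)

lemma D_comb_0: "D_comb 0 c u = (\<lambda>_. 0)"
  by (simp add: D_comb_def)

lemma D_comb_Suc: "D_comb (Suc m) c u = fadd (D_comb m c u) (fscale (c m) (D (u m)))"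
  by (simp add: D_comb_def fadd_def fscale_def)

lemma D_eq_D_comb: "D t = D_comb 1 (\<lambda>_. 1) (\<lambda>_. t)"
  by (simp add: D_comb_def)

lemma ImD_induct [consumes 1, case_names zero step]:
  assumes "X \<in> G" and "P (\<lambda>_. 0)"
    and step: "\<And>X c u. X \<in> G \<Longrightarrow> length u = n - 1 \<Longrightarrow> P X \<Longrightarrow> P (fadd X (fscale c (D u)))"
  shows "P X"
proof -
  obtain m c u where "admissible m u" and "X = D_comb m c u" using assms(1) ImD_iff by blast
  moreover have "admissible m u \<Longrightarrow> P (D_comb m c u)"
  proof (induction m)
    case 0
    then show ?case using assms(2) D_comb_0 by simp
  next
    case (Suc m)
    then have u: "admissible m u" and "length (u m) = n - 1" by (auto simp: admissible_def)
    moreover have "D_comb m c u \<in> G" using u ImD_iff by blast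
    ultimately show ?case unfolding D_comb_Suc using step Suc.IH by blast
  qed
  ultimately show ?thesis by simp
qed

lemma ImD_zero: "(\<lambda>_. 0) \<in> G"
proof -
  have "admissible 0 u" for u by (simp add: admissible_def)
  then show ?thesis unfolding ImD_iff using D_comb_0 by metis
qed

lemma ImD_add_D:
  assumes "X \<in> G" and "length u = n - 1"
  shows "fadd X (fscale a (D u)) \<in> G"
proof -
  obtain m c v where v: "admissible m v" and X: "X = D_comb m c v" using assms(1) ImD_iff by blast
  have "D_comb m (c(m := a)) (v(m := u)) = D_comb m c v"
    unfolding D_comb_def by (intro ext sum.cong) auto
  then have "fadd X (fscale a (D u)) = D_comb (Suc m) (c(m := a)) (v(m := u))"
    unfolding X D_comb_Suc by simp
  moreover have "admissible (Suc m) (v(m := u))"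
    using v assms(2) by (auto simp: admissible_def less_Suc_eq)
  ultimately show ?thesis unfolding ImD_iff by blast
qed

lemma ImD_D: "length u = n - 1 \<Longrightarrow> D u \<in> G"
  using ImD_add_D[OF ImD_zero, of u 1] by (simp add: fadd_def fscale_def)

lemma ImD_fadd: assumes "X \<in> G" and "Y \<in> G" shows "fadd X Y \<in> G"
  using assms(2)
proof (induction rule: ImD_induct)
  case zero
  then show ?case using assms(1) by (simp add: fadd_def)
next
  case (step Y c u)
  have "fadd X (fadd Y (fscale c (D u))) = fadd (fadd X Y) (fscale c (D u))"
    by (simp add: fadd_def add.assoc)
  then show ?case using ImD_add_D step by simp
qed

lemma ImD_fscale: assumes "X \<in> G" shows "fscale a X \<in> G"
  using assms
proof (induction rule: ImD_induct)
  case zero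
  then show ?case using ImD_zero by (simp add: fscale_def)
next
  case (step X c u)
  have "fscale a (fadd X (fscale c (D u))) = fadd (fscale a X) (fscale (a * c) (D u))"
    by (simp add: fadd_def fscale_def scaleR_add_right)
  then show ?case using ImD_add_D step by simp
qed

lemma fsubspace_ImD: "fsubspace G"
  using ImD_zero ImD_fadd ImD_fscale by (simp add: fsubspace_def)

lemma linear_ImD: assumes "X \<in> G" shows "linear X"
  using assms
proof (induction rule: ImD_induct)
  case zero
  then show ?case by (simp add: linear_zero)
next
  case (step X c u)
  then have "linear (\<lambda>w. X w + c *\<^sub>R D u w)"
    using linear_D by (intro linear_compose_add linear_compose_scale_right) auto
  then show ?case by (simp add: fadd_def fscale_def)
qed

lemma ImD_bilinear_op_closed:
  assumes b: "bilinear_op_on G b"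
    and gen: "\<And>u t. length u = n - 1 \<Longrightarrow> length t = n - 1 \<Longrightarrow> b (D u) (D t) \<in> G"
    and "X \<in> G" and "Y \<in> G"
  shows "b X Y \<in> G"
proof -
  have D_left: "b (D u) Y \<in> G" if u: "length u = n - 1" and "Y \<in> G" for u Y
    using \<open>Y \<in> G\<close>
  proof (induction rule: ImD_induct)
    case zero
    then show ?case using bilinear_op_on_zero(2)[OF b ImD_D[OF u]] ImD_zero by simp
  next
    case (step Y c t)
    then show ?case
      using bilinear_op_on_add_scale(2)[OF b step(1) ImD_D[OF step(2)] ImD_D[OF u]] gen[OF u step(2)]
        ImD_fadd ImD_fscale by simp
  qed
  show ?thesis using \<open>X \<in> G\<close>
  proof (induction rule: ImD_induct)
    case zero
    then show ?case using bilinear_op_on_zero(1)[OF b \<open>Y \<in> G\<close>] ImD_zero by simp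
  next
    case (step X c u)
    then show ?case
      using bilinear_op_on_add_scale(1)[OF b step(1) ImD_D[OF step(2)] \<open>Y \<in> G\<close>]
        D_left[OF step(2) \<open>Y \<in> G\<close>] ImD_fadd ImD_fscale by simp
  qed
qed

lemma ImD_bilinear_eq_0:
  assumes B: "bilinear_on G B"
    and gen: "\<And>u t. length u = n - 1 \<Longrightarrow> length t = n - 1 \<Longrightarrow> B (D u) (D t) = 0"
    and "X \<in> G" and "Z \<in> G"
  shows "B X Z = 0"
proof -
  have D_left: "B (D u) Z = 0" if u: "length u = n - 1" and "Z \<in> G" for u Z
    using \<open>Z \<in> G\<close>
  proof (induction rule: ImD_induct)
    case zero
    then show ?case using bilinear_on_zero(2)[OF B ImD_D[OF u]] by simp
  next
    case (step Z c t)
    then show ?case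
      using bilinear_on_add_scale(2)[OF B step(1) ImD_D[OF step(2)] ImD_D[OF u]] gen[OF u step(2)]
      by simp
  qed
  show ?thesis using \<open>X \<in> G\<close>
  proof (induction rule: ImD_induct)
    case zero
    then show ?case using bilinear_on_zero(1)[OF B \<open>Z \<in> G\<close>] by simp
  next
    case (step X c u)
    then show ?case
      using bilinear_on_add_scale(1)[OF B step(1) ImD_D[OF step(2)] \<open>Z \<in> G\<close>]
        D_left[OF step(2) \<open>Z \<in> G\<close>] by simp
  qed
qed

subsection \<open>The Lie algebra Im D\<close>

lemma commutator_D_D:
  assumes lu: "length u = n - 1" and lv: "length v = n - 1"
  shows "commutator (D u) (D v) = D_comb (n - 1) (\<lambda>_. 1) (\<lambda>i. v[i := D u (v ! i)])"
proof
  fix w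
  obtain k where n: "n = Suc k" using n_ge_2 by (cases n) auto
  have lv': "length v = k" using lv n by simp
  have "br (u @ [br (v @ [w])]) = (\<Sum>i<Suc k. br ((v @ [w])[i := br (u @ [(v @ [w]) ! i])]))"
    using leibniz[OF lu, of "v @ [w]"] lv n by simp
  also have "\<dots> = (\<Sum>i<k. br (v[i := br (u @ [v ! i])] @ [w])) + br (v @ [br (u @ [w])])"
    using lv' by (simp add: list_update_append nth_append)
  finally show "commutator (D u) (D v) w = D_comb (n - 1) (\<lambda>_. 1) (\<lambda>i. v[i := D u (v ! i)]) w"
    using n by (simp add: commutator_def D_comb_def Dop_def)
qed

lemma ImD_commutator: assumes "X \<in> G" and "Y \<in> G" shows "commutator X Y \<in> G"
proof (rule ImD_bilinear_op_closed[OF commutator_bilinear_op_on[OF linear_ImD] _ assms])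
  fix u t :: "'v list" assume "length u = n - 1" "length t = n - 1"
  then show "commutator (D u) (D t) \<in> G"
    using commutator_D_D ImD_iff by (metis admissible_def length_list_update)
qed

lemma lie_algebra_ImD: "lie_algebra_on G commutator"
  using lie_algebra_on_commutator fsubspace_ImD linear_ImD ImD_commutator by blast

lemma gen_orthogonal_ImD: "gen_orthogonal n S G id"
  unfolding gen_orthogonal_def
proof (intro ballI allI impI)
  fix X and ws :: "'v list" assume "X \<in> G" and lw: "length ws = n - 1"
  then show "(\<Sum>i<n - 1. S (ws[i := id X (ws ! i)])) = 0"
  proof (induction rule: ImD_induct)
    case zero
    then show ?case using linear_0[OF linear_S_slot[OF lw]] by simp
  next
    case (step X c u)
    have "S (ws[i := id (fadd X (fscale c (D u))) (ws ! i)])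
        = S (ws[i := id X (ws ! i)]) + c * S (ws[i := br (u @ [ws ! i])])" if "i < n - 1" for i
      using linear_add[OF linear_S_slot[OF lw that]] linear_scale[OF linear_S_slot[OF lw that]]
      by (simp add: fadd_def fscale_def Dop_def)
    then show ?case
      using step unitarity[OF step(2) lw] by (simp add: sum.distrib sum_distrib_left[symmetric])
  qed
qed

subsection \<open>The invariant form \<open>\<omega>\<close>\<close>

definition apply_S :: "('v \<Rightarrow> 'v) \<Rightarrow> 'v list \<Rightarrow> real" where
  "apply_S X v = S (X (hd v) # tl v)"

lemma apply_S_D_comb:
  assumes "length v = n - 1"
  shows "apply_S (D_comb m c u) v = (\<Sum>k<m. c k * S (br (u k @ [hd v]) # tl v))"
proof -
  have lin: "linear (\<lambda>y. S (y # tl v))" using linear_S_hd assms by simp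
  show ?thesis
    unfolding apply_S_def D_comb_def Dop_def
    by (simp add: linear_sum[OF lin] linear_scale[OF lin])
qed

lemma apply_S_lincomb:
  assumes "length v = n - 1"
  shows "apply_S (fadd (fscale a X) (fscale c Y)) v = a * apply_S X v + c * apply_S Y v"
  using linear_add[OF linear_S_hd] linear_scale[OF linear_S_hd] assms
  by (simp add: apply_S_def fadd_def fscale_def)

lemma D_comb_pairing_swap:
  assumes u: "admissible m u" and v: "admissible p v"
  shows "(\<Sum>l<p. d l * apply_S (D_comb m c u) (v l)) = (\<Sum>k<m. c k * apply_S (D_comb p d v) (u k))"
proof -
  have "(\<Sum>l<p. d l * apply_S (D_comb m c u) (v l))
      = (\<Sum>l<p. \<Sum>k<m. d l * c k * S (br (v l @ [hd (u k)]) # tl (u k)))"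
    using u v by (auto simp: apply_S_D_comb admissible_def symmetry sum_distrib_left mult.assoc
        intro!: sum.cong)
  also have "\<dots> = (\<Sum>k<m. c k * apply_S (D_comb p d v) (u k))"
    using u by (subst sum.swap)
      (auto simp: apply_S_D_comb admissible_def sum_distrib_left mult_ac intro!: sum.cong)
  finally show ?thesis .
qed

text \<open>Outside Im D the chosen representation is arbitrary, so only values on Im D are meaningful.\<close>
definition omega :: "('v \<Rightarrow> 'v) \<Rightarrow> ('v \<Rightarrow> 'v) \<Rightarrow> real" where
  "omega X Y = (case SOME (m, c, u). admissible m u \<and> X = D_comb m c u of
     (m, c, u) \<Rightarrow> \<Sum>k<m. c k * apply_S Y (u k))"

lemma omega_D_comb_left:
  assumes u: "admissible m u" and X: "X = D_comb m c u" and "Y \<in> G"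
  shows "omega X Y = (\<Sum>k<m. c k * apply_S Y (u k))"
proof -
  define r where "r = (SOME (m, c, u). admissible m u \<and> X = D_comb m c u)"
  obtain m' c' u' where r': "r = (m', c', u')" by (cases r)
  have "\<exists>r. case r of (m, c, u) \<Rightarrow> admissible m u \<and> X = D_comb m c u"
    using u X by (intro exI[of _ "(m, c, u)"]) simp
  from someI_ex[OF this] have u': "admissible m' u'" and X': "X = D_comb m' c' u'"
    unfolding r_def[symmetric] r' by simp_all
  obtain p d v where v: "admissible p v" and Y: "Y = D_comb p d v" using \<open>Y \<in> G\<close> ImD_iff by blast
  have "omega X Y = (\<Sum>k<m'. c' k * apply_S Y (u' k))"
    unfolding omega_def r_def[symmetric] r' by simp
  also have "\<dots> = (\<Sum>l<p. d l * apply_S X (v l))"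
    using D_comb_pairing_swap[OF u' v, of d c'] by (simp add: X' Y)
  also have "\<dots> = (\<Sum>k<m. c k * apply_S Y (u k))"
    using D_comb_pairing_swap[OF u v, of d c] by (simp add: X Y)
  finally show ?thesis .
qed

lemma omega_D_comb_right:
  assumes "X \<in> G" and v: "admissible p v" and Y: "Y = D_comb p d v"
  shows "omega X Y = (\<Sum>l<p. d l * apply_S X (v l))"
proof -
  obtain m c u where u: "admissible m u" and X: "X = D_comb m c u" using assms(1) ImD_iff by blast
  have "Y \<in> G" using v Y ImD_iff by blast
  then have "omega X Y = (\<Sum>k<m. c k * apply_S Y (u k))" by (rule omega_D_comb_left[OF u X])
  also have "\<dots> = (\<Sum>l<p. d l * apply_S X (v l))"
    using D_comb_pairing_swap[OF u v, of d c] by (simp add: X Y)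
  finally show ?thesis .
qed

lemma omega_D_right:
  assumes "X \<in> G" and "length t = n - 1"
  shows "omega X (D t) = apply_S X t"
proof -
  have "admissible 1 (\<lambda>_. t)" using assms(2) by (simp add: admissible_def)
  from omega_D_comb_right[OF assms(1) this D_eq_D_comb] show ?thesis by simp
qed

lemma omega_sym: assumes "X \<in> G" and "Y \<in> G" shows "omega X Y = omega Y X"
proof -
  obtain m c u where u: "admissible m u" and X: "X = D_comb m c u" using assms(1) ImD_iff by blast
  show ?thesis
    using omega_D_comb_left[OF u X assms(2)] omega_D_comb_right[OF assms(2) u X] by simp
qed

lemma bilinear_on_omega: "bilinear_on G omega"
proof -
  have left: "omega Z (fadd (fscale a X) (fscale c Y)) = a * omega Z X + c * omega Z Y"
    if "X \<in> G" "Y \<in> G" "Z \<in> G" for X Y Z a c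
  proof -
    obtain p d w where w: "admissible p w" and Z: "Z = D_comb p d w" using \<open>Z \<in> G\<close> ImD_iff by blast
    have "fadd (fscale a X) (fscale c Y) \<in> G" using that ImD_fadd ImD_fscale by simp
    then show ?thesis
      using omega_D_comb_left[OF w Z] that w
      by (simp add: apply_S_lincomb admissible_def sum_distrib_left sum.distrib algebra_simps)
  qed
  have "omega (fadd (fscale a X) (fscale c Y)) Z = a * omega X Z + c * omega Y Z"
    if "X \<in> G" "Y \<in> G" "Z \<in> G" for X Y Z a c
  proof -
    have "fadd (fscale a X) (fscale c Y) \<in> G" using that ImD_fadd ImD_fscale by simp
    then have "omega (fadd (fscale a X) (fscale c Y)) Z = omega Z (fadd (fscale a X) (fscale c Y))"
      using omega_sym \<open>Z \<in> G\<close> by blast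
    then show ?thesis
      using left[OF that] by (simp add: omega_sym[OF that(3) that(1)] omega_sym[OF that(3) that(2)])
  qed
  with left show ?thesis unfolding bilinear_on_def by blast
qed

lemma omega_nondegenerate:
  assumes "X \<in> G" and "\<forall>Y\<in>G. omega X Y = 0"
  shows "X = (\<lambda>_. 0)"
proof
  fix w
  have "S (X w # vs) = 0" if "length vs = n - 1 - 1" for vs
  proof -
    have "length (w # vs) = n - 1" using that n_ge_2 by simp
    then show ?thesis
      using assms ImD_D omega_D_right by (fastforce simp: apply_S_def)
  qed
  then show "X w = 0" using nondegenerate_S unfolding nondegenerate_form_def by blast
qed

lemma omega_invariant_D:
  assumes lu: "length u = n - 1" and lt: "length t = n - 1" and "Y \<in> G"
  shows "omega (commutator (D u) Y) (D t) = - omega Y (commutator (D u) (D t))"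
proof -
  define k where "k = n - 2"
  have k: "n - 1 = Suc k" using n_ge_2 by (simp add: k_def)
  obtain h \<tau> where t: "t = h # \<tau>" and l\<tau>: "length \<tau> = k" using lt k by (cases t) auto
  have lin: "linear (\<lambda>z. S (z # \<tau>))" using linear_S_hd[of \<tau>] l\<tau> by (simp add: k_def)
  have "commutator (D u) Y \<in> G" using ImD_commutator ImD_D[OF lu] \<open>Y \<in> G\<close> by simp
  then have "omega (commutator (D u) Y) (D t) = apply_S (commutator (D u) Y) t"
    by (rule omega_D_right[OF _ lt])
  also have "\<dots> = S (D u (Y h) # \<tau>) - S (Y (D u h) # \<tau>)"
    unfolding apply_S_def commutator_def t using linear_diff[OF lin] by simp
  finally have L: "omega (commutator (D u) Y) (D t) = S (D u (Y h) # \<tau>) - S (Y (D u h) # \<tau>)" .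
  have "admissible (n - 1) (\<lambda>i. t[i := D u (t ! i)])" by (simp add: admissible_def lt)
  then have "omega Y (commutator (D u) (D t)) = (\<Sum>i<n - 1. 1 * apply_S Y (t[i := D u (t ! i)]))"
    by (rule omega_D_comb_right[OF \<open>Y \<in> G\<close> _ commutator_D_D[OF lu lt]])
  also have "\<dots> = (\<Sum>i<Suc k. apply_S Y ((h # \<tau>)[i := D u ((h # \<tau>) ! i)]))"
    unfolding k t by simp
  also have "\<dots> = S (Y (D u h) # \<tau>) + (\<Sum>j<k. S (Y h # \<tau>[j := D u (\<tau> ! j)]))"
    by (subst sum.lessThan_Suc_shift) (simp add: apply_S_def)
  finally have R: "omega Y (commutator (D u) (D t))
      = S (Y (D u h) # \<tau>) + (\<Sum>j<k. S (Y h # \<tau>[j := D u (\<tau> ! j)]))" .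
  have "length (Y h # \<tau>) = n - 1" using l\<tau> k by simp
  from unitarity[OF lu this]
  have "(\<Sum>i<Suc k. S ((Y h # \<tau>)[i := br (u @ [(Y h # \<tau>) ! i])])) = 0"
    unfolding k .
  then have U: "S (D u (Y h) # \<tau>) + (\<Sum>j<k. S (Y h # \<tau>[j := D u (\<tau> ! j)])) = 0"
    by (subst (asm) sum.lessThan_Suc_shift) (simp add: Dop_def)
  show ?thesis using L R U by simp
qed

lemma omega_invariant:
  assumes "X \<in> G" and "Y \<in> G" and "Z \<in> G"
  shows "omega (commutator X Y) Z = - omega Y (commutator X Z)"
proof -
  have "omega (commutator X Y) Z + omega Y (commutator X Z) = 0"
  proof (rule ImD_bilinear_eq_0[OF _ _ assms(1,3)])
    show "bilinear_on G (\<lambda>X Z. omega (commutator X Y) Z + omega Y (commutator X Z))"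
      using bilinear_on_invariance_defect[OF bilinear_on_omega
          commutator_bilinear_op_on[OF linear_ImD] ImD_commutator \<open>Y \<in> G\<close>] .
    show "omega (commutator (D u) Y) (D t) + omega Y (commutator (D u) (D t)) = 0"
      if "length u = n - 1" "length t = n - 1" for u t
      using omega_invariant_D[OF that \<open>Y \<in> G\<close>] by simp
  qed
  then show ?thesis by simp
qed

lemma metric_lie_algebra_ImD: "metric_lie_algebra G commutator omega"
  unfolding metric_lie_algebra_def
  using lie_algebra_ImD bilinear_on_omega omega_sym omega_nondegenerate omega_invariant by blast

end

theorem mainTheorem5:
  fixes n :: nat
    and br :: "'v::euclidean_space list \<Rightarrow> 'v"
    and S :: "'v list \<Rightarrow> real"
  assumes "n \<ge> 2"
    and "gen_metric_leibniz n br S"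
  shows "\<exists>\<omega>. (\<forall>us vs. length us = n - 1 \<longrightarrow> length vs = n - 1 \<longrightarrow>
               \<omega> (Dop br us) (Dop br vs) = S (br (us @ [hd vs]) # tl vs)) \<and>
             lie_triple_data n (ImD n br) commutator \<omega> S id"
proof -
  interpret generalized_metric_leibniz n br S
    using assms by unfold_locales
  have "omega (Dop br us) (Dop br vs) = S (br (us @ [hd vs]) # tl vs)"
    if "length us = n - 1" "length vs = n - 1" for us vs
    using that omega_D_right ImD_D by (simp add: apply_S_def Dop_def)
  moreover have "lie_triple_data n (ImD n br) commutator omega S id"
    unfolding lie_triple_data_def
    using metric_lie_algebra_ImD symmetric_S nondegenerate_S representation_on_id[OF linear_ImD]
      gen_orthogonal_ImD by simp
  ultimately show ?thesis by blast
qed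

end
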